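(* For almost every $\tau\in\mathbb{R}$ (with respect to Lebesgue measure) there exists $N_0(\tau)$ such that for all $N\ge N_0(\tau)$, \[ \mathfrak{m}_N(\tau)>\exp(-0.665\,N). \]
   Context: For a positive integer $N$ and $\tau\in\mathbb{R}$, $\mathfrak{m}_N(\tau):=\min\left\{\left|\tau-\sum_{n=1}^N s_n/n\right| : s_1,\dots,s_N\in\{-1,+1\}\right\}$. *)

theory Defs
  imports "HOL-Analysis.Analysis"
begin

definition frak_m :: "nat \<Rightarrow> real \<Rightarrow> real" where
  "frak_m N \<tau> = Min ((\<lambda>s. \<bar>\<tau> - (\<Sum>n=1..N. s n / real n)\<bar>) ` ({1..N} \<rightarrow>\<^sub>E {-1, 1}))"

end

theory Submission
  imports Defs
begin

text \<open>
  The signed harmonic sums with \<open>N\<close> terms take far fewer than \<open>2^N\<close> distinct values.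
  For \<open>n\<close> coprime to 6 with \<open>24 n \<le> N\<close>, the eight terms \<open>\<plusminus>1/(n d)\<close>, \<open>d\<close> dividing 24,
  are all multiples of \<open>1/(24 n)\<close> and sum to one of only 61 values; when merely \<open>12 n \<le> N\<close>,
  the divisors of 12 give 29 values out of 64. These blocks are pairwise disjoint, so at most
  \<open>2^N \<beta>^(N div 144)\<close> values occur, with \<open>\<beta> = (29/64)^4 (61/116)^2\<close>. Since
  \<open>2^144 \<beta> < e^(144 * 0.665)\<close>, the intervals of radius \<open>exp (-0.665 N)\<close> around these values
  have summable total length, and by Borel--Cantelli almost every \<open>\<tau>\<close> lies in only
  finitely many of them.
\<close>

definition signed_harmonic_sums :: "nat set \<Rightarrow> real set" where
  "signed_harmonic_sums I = (\<lambda>s. \<Sum>n\<in>I. s n / real n) ` (I \<rightarrow>\<^sub>E {-1, 1})"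

lemma finite_signed_harmonic_sums: "finite I \<Longrightarrow> finite (signed_harmonic_sums I)"
  unfolding signed_harmonic_sums_def by (intro finite_imageI finite_PiE) auto

lemma card_signed_harmonic_sums_le: "finite I \<Longrightarrow> card (signed_harmonic_sums I) \<le> 2 ^ card I"
proof -
  assume "finite I"
  then have "card (signed_harmonic_sums I) \<le> card (I \<rightarrow>\<^sub>E ({-1, 1} :: real set))"
    unfolding signed_harmonic_sums_def by (intro card_image_le finite_PiE) auto
  also have "\<dots> = 2 ^ card I"
    using \<open>finite I\<close> by (simp add: card_PiE numeral_2_eq_2)
  finally show ?thesis .
qed

lemma signed_harmonic_sums_empty [simp]: "signed_harmonic_sums {} = {0}"
  unfolding signed_harmonic_sums_def by simp

lemma sum_in_signed_harmonic_sums: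
  assumes "s \<in> J \<rightarrow>\<^sub>E {-1, 1}" "I \<subseteq> J"
  shows "(\<Sum>n\<in>I. s n / real n) \<in> signed_harmonic_sums I"
proof -
  have "(\<Sum>n\<in>I. s n / real n) = (\<Sum>n\<in>I. restrict s I n / real n)"
    by simp
  moreover have "restrict s I \<in> I \<rightarrow>\<^sub>E {-1, 1}"
    using assms by auto
  ultimately show ?thesis
    unfolding signed_harmonic_sums_def by blast
qed

lemma signed_harmonic_sums_Un_subset:
  assumes "finite I" "finite J" "I \<inter> J = {}"
  shows "signed_harmonic_sums (I \<union> J)
    \<subseteq> (\<lambda>(a, b). a + b) ` (signed_harmonic_sums I \<times> signed_harmonic_sums J)"
proof
  fix x assume "x \<in> signed_harmonic_sums (I \<union> J)"
  then obtain s where s: "s \<in> (I \<union> J) \<rightarrow>\<^sub>E {-1, 1}" and x: "x = (\<Sum>n\<in>I \<union> J. s n / real n)"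
    unfolding signed_harmonic_sums_def by auto
  have "x = (\<Sum>n\<in>I. s n / real n) + (\<Sum>n\<in>J. s n / real n)"
    using x assms by (simp add: sum.union_disjoint)
  moreover have "(\<Sum>n\<in>I. s n / real n) \<in> signed_harmonic_sums I"
    and "(\<Sum>n\<in>J. s n / real n) \<in> signed_harmonic_sums J"
    using s by (auto intro: sum_in_signed_harmonic_sums)
  ultimately show "x \<in> (\<lambda>(a, b). a + b) ` (signed_harmonic_sums I \<times> signed_harmonic_sums J)"
    by force
qed

lemma card_signed_harmonic_sums_Un_le:
  assumes "finite I" "finite J" "I \<inter> J = {}"
  shows "card (signed_harmonic_sums (I \<union> J))
    \<le> card (signed_harmonic_sums I) * card (signed_harmonic_sums J)"
proof -
  have fin: "finite (signed_harmonic_sums I \<times> signed_harmonic_sums J)"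
    using assms by (simp add: finite_signed_harmonic_sums)
  have "card (signed_harmonic_sums (I \<union> J))
      \<le> card ((\<lambda>(a, b). a + b) ` (signed_harmonic_sums I \<times> signed_harmonic_sums J))"
    using fin by (intro card_mono signed_harmonic_sums_Un_subset assms) auto
  also have "\<dots> \<le> card (signed_harmonic_sums I \<times> signed_harmonic_sums J)"
    using fin by (rule card_image_le)
  finally show ?thesis
    by (simp add: card_cartesian_product)
qed

lemma card_signed_harmonic_sums_UN_le:
  assumes "finite A" "\<And>n. n \<in> A \<Longrightarrow> finite (G n)" "disjoint_family_on G A"
  shows "card (signed_harmonic_sums (\<Union>n\<in>A. G n)) \<le> (\<Prod>n\<in>A. card (signed_harmonic_sums (G n)))"
  using assms
proof (induction A rule: finite_induct)
  case empty
  then show ?case by simp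
next
  case (insert a A)
  have "G a \<inter> (\<Union>n\<in>A. G n) = {}"
    using insert.prems(2) insert.hyps(2) by (fastforce simp: disjoint_family_on_def)
  then have "card (signed_harmonic_sums (G a \<union> (\<Union>n\<in>A. G n)))
      \<le> card (signed_harmonic_sums (G a)) * card (signed_harmonic_sums (\<Union>n\<in>A. G n))"
    using insert by (intro card_signed_harmonic_sums_Un_le) auto
  also have "\<dots> \<le> card (signed_harmonic_sums (G a)) * (\<Prod>n\<in>A. card (signed_harmonic_sums (G n)))"
    using insert by (auto intro: disjoint_family_on_mono)
  finally show ?case
    using insert.hyps by simp
qed

lemma signed_harmonic_sums_image_mult_subset:
  assumes "m > 0"
  shows "signed_harmonic_sums ((*) m ` B) \<subseteq> (\<lambda>x. x / real m) ` signed_harmonic_sums B"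
proof
  fix x assume "x \<in> signed_harmonic_sums ((*) m ` B)"
  then obtain s where s: "s \<in> (*) m ` B \<rightarrow>\<^sub>E {-1, 1}" and x: "x = (\<Sum>n\<in>(*) m ` B. s n / real n)"
    unfolding signed_harmonic_sums_def by auto
  define t where "t = restrict (\<lambda>d. s (m * d)) B"
  have "inj_on ((*) m) B"
    using assms by (auto simp: inj_on_def)
  then have "x = (\<Sum>d\<in>B. s (m * d) / (real m * real d))"
    unfolding x by (simp add: sum.reindex)
  also have "\<dots> = (\<Sum>d\<in>B. t d / real d) / real m"
    unfolding t_def by (simp add: sum_divide_distrib mult.commute)
  finally have "x = (\<Sum>d\<in>B. t d / real d) / real m" .
  moreover have "t \<in> B \<rightarrow>\<^sub>E {-1, 1}"
    using s unfolding t_def by auto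
  ultimately show "x \<in> (\<lambda>x. x / real m) ` signed_harmonic_sums B"
    unfolding signed_harmonic_sums_def by blast
qed

lemma card_signed_harmonic_sums_image_mult_le:
  assumes "m > 0" "finite B"
  shows "card (signed_harmonic_sums ((*) m ` B)) \<le> card (signed_harmonic_sums B)"
  using assms card_mono[OF _ signed_harmonic_sums_image_mult_subset] card_image_le
  by (metis finite_imageI finite_signed_harmonic_sums le_trans)

lemma signed_harmonic_sums_divisors_subset:
  assumes "finite B" "L > 0" "\<And>d. d \<in> B \<Longrightarrow> d dvd L"
  defines "S \<equiv> \<Sum>d\<in>B. L div d"
  shows "signed_harmonic_sums B \<subseteq> (\<lambda>j. (2 * real j - real S) / real L) ` {0..S}"
proof
  fix x assume "x \<in> signed_harmonic_sums B"
  then obtain s where s: "s \<in> B \<rightarrow>\<^sub>E {-1, 1}" and x: "x = (\<Sum>d\<in>B. s d / real d)"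
    unfolding signed_harmonic_sums_def by auto
  define j where "j = (\<Sum>d\<in>{d\<in>B. s d = 1}. L div d)"
  have "j \<le> S"
    unfolding j_def S_def using assms(1) by (intro sum_mono2) auto
  have term_eq: "s d / real d = (2 * (if s d = 1 then real (L div d) else 0) - real (L div d)) / real L"
    if "d \<in> B" for d
  proof -
    have "real d * real (L div d) = real L"
      using assms(3)[OF that] by (metis dvd_mult_div_cancel of_nat_mult)
    moreover have "d > 0"
      using assms(2) assms(3)[OF that] by (rule dvd_pos_nat)
    ultimately have "1 / real d = real (L div d) / real L"
      using assms(2) by (simp add: field_simps)
    moreover have "s d = -1 \<or> s d = 1"
      using s that by auto
    ultimately show ?thesis
      by auto
  qed
  have "x = (2 * (\<Sum>d\<in>B. if s d = 1 then real (L div d) else 0) - (\<Sum>d\<in>B. real (L div d))) / real L"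
    unfolding x using term_eq by (simp add: sum_divide_distrib[symmetric] sum_subtractf sum_distrib_left)
  also have "\<dots> = (2 * real j - real S) / real L"
    unfolding j_def S_def using assms(1) by (simp add: sum.inter_filter[symmetric])
  finally show "x \<in> (\<lambda>j. (2 * real j - real S) / real L) ` {0..S}"
    using \<open>j \<le> S\<close> by auto
qed

lemma card_signed_harmonic_sums_divisors_le:
  assumes "finite B" "L > 0" "\<And>d. d \<in> B \<Longrightarrow> d dvd L"
  shows "card (signed_harmonic_sums B) \<le> (\<Sum>d\<in>B. L div d) + 1"
proof -
  have "card (signed_harmonic_sums B)
      \<le> card ((\<lambda>j. (2 * real j - real (\<Sum>d\<in>B. L div d)) / real L) ` {0..\<Sum>d\<in>B. L div d})"
    using assms by (intro card_mono signed_harmonic_sums_divisors_subset) simp_all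
  also have "\<dots> \<le> card {0..\<Sum>d\<in>B. L div d}"
    by (rule card_image_le) simp
  finally show ?thesis
    by simp
qed

lemma card_signed_harmonic_sums_blocks_le:
  assumes "finite I" "finite A" "\<And>n. n \<in> A \<Longrightarrow> G n \<subseteq> I" "disjoint_family_on G A"
    and "\<And>n. n \<in> A \<Longrightarrow> real (card (signed_harmonic_sums (G n))) \<le> c n"
  shows "real (card (signed_harmonic_sums I)) \<le> 2 ^ card I * (\<Prod>n\<in>A. c n / 2 ^ card (G n))"
proof -
  define U where "U = (\<Union>n\<in>A. G n)"
  have "U \<subseteq> I"
    unfolding U_def using assms(3) by blast
  then have "finite U"
    using assms(1) by (rule finite_subset)
  have finG: "finite (G n)" if "n \<in> A" for n
    using assms(1,3) that by (meson finite_subset)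
  have "card (signed_harmonic_sums (U \<union> (I - U)))
      \<le> card (signed_harmonic_sums U) * card (signed_harmonic_sums (I - U))"
    using assms(1) \<open>finite U\<close> by (intro card_signed_harmonic_sums_Un_le) auto
  moreover have "U \<union> (I - U) = I"
    using \<open>U \<subseteq> I\<close> by blast
  ultimately have "card (signed_harmonic_sums I)
      \<le> card (signed_harmonic_sums U) * card (signed_harmonic_sums (I - U))"
    by simp
  also have "\<dots> \<le> (\<Prod>n\<in>A. card (signed_harmonic_sums (G n))) * 2 ^ card (I - U)"
    unfolding U_def using assms(1,2,4) finG
    by (intro mult_le_mono card_signed_harmonic_sums_UN_le card_signed_harmonic_sums_le) simp_all
  finally have "real (card (signed_harmonic_sums I))
      \<le> real ((\<Prod>n\<in>A. card (signed_harmonic_sums (G n))) * 2 ^ card (I - U))"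
    by (rule of_nat_mono)
  also have "\<dots> = (\<Prod>n\<in>A. real (card (signed_harmonic_sums (G n)))) * 2 ^ card (I - U)"
    by simp
  also have "\<dots> \<le> (\<Prod>n\<in>A. c n) * 2 ^ card (I - U)"
    using assms(5) by (intro mult_right_mono prod_mono) auto
  also have "card (I - U) = card I - (\<Sum>n\<in>A. card (G n))"
    using \<open>U \<subseteq> I\<close> \<open>finite U\<close> assms(2,4) finG
    by (simp add: card_Diff_subset U_def card_UN_disjoint')
  also have "(2::real) ^ (card I - (\<Sum>n\<in>A. card (G n))) = 2 ^ card I / (\<Prod>n\<in>A. 2 ^ card (G n))"
  proof -
    have "(\<Sum>n\<in>A. card (G n)) \<le> card I"
      using \<open>U \<subseteq> I\<close> assms(1,2,4) finG card_mono[of I U]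
      by (simp add: U_def card_UN_disjoint')
    then show ?thesis
      by (simp add: power_diff power_sum)
  qed
  finally show ?thesis
    by (simp add: prod_dividef mult.commute)
qed

lemma coprime_mult_divisors_eq:
  fixes n m d e L :: nat
  assumes "coprime n L" "coprime m L" "d dvd L" "e dvd L" "n * d = m * e"
  shows "n = m"
proof (rule dvd_antisym)
  have "coprime n e" "coprime m d"
    using assms coprime_divisors[OF dvd_refl] by blast+
  moreover have "n dvd m * e" "m dvd n * d"
    using assms(5) by (metis dvd_triv_left)+
  ultimately show "n dvd m" "m dvd n"
    by (simp_all add: coprime_dvd_mult_left_iff)
qed

lemma coprime_24_if_coprime_6:
  assumes "coprime n (6::nat)"
  shows "coprime n 24"
proof -
  have "coprime n ((6::nat) ^ 3)"
    using assms coprime_power_right_iff by blast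
  then show ?thesis
    using coprime_divisors[of n n 24 "6 ^ 3"] by simp
qed

lemma card_coprime_6_atLeastAtMost_ge: "2 * (M div 6) \<le> card {n\<in>{1..M}. coprime n (6::nat)}"
proof -
  define q where "q = M div 6"
  have coprime_6: "coprime (6 * k + r) (6::nat)" if "r = 1 \<or> r = 5" for k r
  proof -
    have "gcd 6 (k * 6 + r) = gcd 6 r"
      by (rule gcd_add_mult)
    moreover have "gcd 6 r = 1"
      using that by (auto simp: gcd_non_0_nat)
    ultimately show ?thesis
      by (simp add: coprime_iff_gcd_eq_1 gcd.commute mult.commute)
  qed
  have "(\<lambda>k. 6 * k + 1) ` {..<q} \<union> (\<lambda>k. 6 * k + 5) ` {..<q} \<subseteq> {n\<in>{1..M}. coprime n 6}"
    using coprime_6[of 1] coprime_6[of 5] unfolding q_def by auto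
  then have "card ((\<lambda>k. 6 * k + 1) ` {..<q} \<union> (\<lambda>k. 6 * k + 5) ` {..<q})
      \<le> card {n\<in>{1..M}. coprime n (6::nat)}"
    by (intro card_mono) auto
  moreover have "(\<lambda>k. 6 * k + 1) ` {..<q} \<inter> (\<lambda>k. 6 * k + (5::nat)) ` {..<q} = {}"
    by auto presburger
  ultimately show ?thesis
    unfolding q_def by (simp add: card_Un_disjoint card_image inj_on_def)
qed

definition harmonic_block :: "nat \<Rightarrow> nat \<Rightarrow> nat set" where
  "harmonic_block N n =
     (*) n ` (if 24 * n \<le> N then {1, 2, 3, 4, 6, 8, 12, 24} else {1, 2, 3, 4, 6, 12})"

lemma harmonic_block_subset:
  assumes "0 < n" "12 * n \<le> N"
  shows "harmonic_block N n \<subseteq> {1..N}"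
proof -
  define K :: nat where "K = (if 24 * n \<le> N then 24 else 12)"
  have "harmonic_block N n \<subseteq> (*) n ` {1..K}"
    unfolding harmonic_block_def K_def by auto
  moreover have "n * K \<le> N"
    using assms(2) unfolding K_def by (simp add: mult.commute)
  then have "n * d \<le> N" if "d \<le> K" for d
    using that by (meson le_trans mult_le_mono2)
  ultimately show ?thesis
    using assms(1) by fastforce
qed

lemma disjoint_family_on_image_mult_divisors:
  fixes L :: nat
  assumes "\<And>d. d \<in> D \<Longrightarrow> d dvd L"
  shows "disjoint_family_on (\<lambda>n. (*) n ` D) {n. coprime n L}"
  unfolding disjoint_family_on_def
proof (intro ballI impI)
  fix n m
  assume "n \<in> {n. coprime n L}" "m \<in> {n. coprime n L}" "n \<noteq> m"
  then have "n * d \<noteq> m * e" if "d \<in> D" "e \<in> D" for d e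
    using coprime_mult_divisors_eq[of n L m d e] assms[OF that(1)] assms[OF that(2)] by auto
  then show "(*) n ` D \<inter> (*) m ` D = {}"
    by blast
qed

lemma disjoint_family_on_harmonic_block:
  "disjoint_family_on (harmonic_block N) {n. coprime n 6}"
proof -
  have "disjoint_family_on (\<lambda>n. (*) n ` {1, 2, 3, 4, 6, 8, 12, 24}) {n. coprime n (24::nat)}"
    by (rule disjoint_family_on_image_mult_divisors) auto
  moreover have "harmonic_block N n \<subseteq> (*) n ` {1, 2, 3, 4, 6, 8, 12, 24}" for n
    unfolding harmonic_block_def by auto
  ultimately show ?thesis
    unfolding disjoint_family_on_def using coprime_24_if_coprime_6 by (metis mem_Collect_eq subset_empty Int_mono)
qed

lemma card_harmonic_block:
  assumes "0 < n"
  shows "card (harmonic_block N n) = (if 24 * n \<le> N then 8 else 6)"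
proof -
  have "inj_on ((*) n) D" for D
    using assms by (auto simp: inj_on_def)
  then show ?thesis
    unfolding harmonic_block_def by (simp add: card_image)
qed

lemma card_signed_harmonic_sums_harmonic_block_le:
  assumes "0 < n"
  shows "card (signed_harmonic_sums (harmonic_block N n)) \<le> (if 24 * n \<le> N then 61 else 29)"
proof -
  have scale: "card (signed_harmonic_sums ((*) n ` D)) \<le> card (signed_harmonic_sums D)"
    if "finite D" for D
    using assms that by (rule card_signed_harmonic_sums_image_mult_le)
  have "card (signed_harmonic_sums {1, 2, 3, 4, 6, 8, 12, 24})
      \<le> (\<Sum>d\<in>{1, 2, 3, 4, 6, 8, 12, 24}. 24 div d) + 1"
    by (rule card_signed_harmonic_sums_divisors_le) auto
  moreover have "card (signed_harmonic_sums {1, 2, 3, 4, 6, 12})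
      \<le> (\<Sum>d\<in>{1, 2, 3, 4, 6, 12}. 12 div d) + 1"
    by (rule card_signed_harmonic_sums_divisors_le) auto
  ultimately show ?thesis
    unfolding harmonic_block_def
    using scale[of "{1, 2, 3, 4, 6, 8, 12, 24}"] scale[of "{1, 2, 3, 4, 6, 12}"] by simp
qed

lemma card_signed_harmonic_sums_atLeastAtMost_le:
  "real (card (signed_harmonic_sums {1..N}))
    \<le> 2 ^ N * (29/64) ^ card {n\<in>{1..N div 12}. coprime n (6::nat)}
        * (61/116) ^ card {n\<in>{1..N div 24}. coprime n (6::nat)}"
proof -
  define A where "A = {n\<in>{1..N div 12}. coprime n (6::nat)}"
  define c :: "nat \<Rightarrow> real" where "c n = (if 24 * n \<le> N then 61 else 29)" for n
  have "disjoint_family_on (harmonic_block N) A"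
    using disjoint_family_on_harmonic_block by (rule disjoint_family_on_mono[rotated]) (auto simp: A_def)
  moreover have "real (card (signed_harmonic_sums (harmonic_block N n))) \<le> c n" if "n \<in> A" for n
    using card_signed_harmonic_sums_harmonic_block_le[of n N] that
    unfolding A_def c_def by (auto simp flip: of_nat_le_iff)
  moreover have "harmonic_block N n \<subseteq> {1..N}" if "n \<in> A" for n
    using that by (intro harmonic_block_subset) (auto simp: A_def less_eq_div_iff_mult_less_eq)
  ultimately have "real (card (signed_harmonic_sums {1..N}))
      \<le> 2 ^ card {1..N} * (\<Prod>n\<in>A. c n / 2 ^ card (harmonic_block N n))"
    by (intro card_signed_harmonic_sums_blocks_le) (auto simp: A_def)
  also have "(\<Prod>n\<in>A. c n / 2 ^ card (harmonic_block N n))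
      = (\<Prod>n\<in>A. 29/64 * (if 24 * n \<le> N then 61/116 else 1))"
    by (rule prod.cong) (auto simp: A_def c_def card_harmonic_block)
  also have "\<dots> = (29/64) ^ card A * (\<Prod>n\<in>A. if 24 * n \<le> N then 61/116 else 1)"
    by (simp only: prod.distrib prod_constant)
  also have "(\<Prod>n\<in>A. if 24 * n \<le> N then 61/116 else 1) = (61/116::real) ^ card (A \<inter> {n. 24 * n \<le> N})"
    by (simp add: prod.If_cases A_def)
  also have "A \<inter> {n. 24 * n \<le> N} = {n\<in>{1..N div 24}. coprime n 6}"
    unfolding A_def by auto
  finally show ?thesis
    unfolding A_def by simp
qed

lemma card_signed_harmonic_sums_atLeastAtMost_le_power:
  "real (card (signed_harmonic_sums {1..N})) \<le> 2 ^ N * ((29/64) ^ 4 * (61/116) ^ 2) ^ (N div 144)"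
proof -
  define K where "K = N div 144"
  have "N div 12 div 6 = N div 72" "K = N div 72 div 2"
    unfolding K_def using div_mult2_eq[of N 72 2] by (simp_all add: div_mult2_eq)
  then have "4 * K \<le> 2 * (N div 12 div 6)"
    using times_div_less_eq_dividend[of 2 "N div 72"] by linarith
  then have "4 * K \<le> card {n\<in>{1..N div 12}. coprime n (6::nat)}"
    using card_coprime_6_atLeastAtMost_ge[of "N div 12"] by linarith
  then have "(29/64::real) ^ card {n\<in>{1..N div 12}. coprime n (6::nat)} \<le> (29/64) ^ (4 * K)"
    by (rule power_decreasing) auto
  moreover have "2 * K \<le> card {n\<in>{1..N div 24}. coprime n (6::nat)}"
    using card_coprime_6_atLeastAtMost_ge[of "N div 24"] unfolding K_def by (simp add: div_mult2_eq[symmetric])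
  then have "(61/116::real) ^ card {n\<in>{1..N div 24}. coprime n (6::nat)} \<le> (61/116) ^ (2 * K)"
    by (rule power_decreasing) auto
  ultimately have "2 ^ N * (29/64) ^ card {n\<in>{1..N div 12}. coprime n (6::nat)}
        * (61/116) ^ card {n\<in>{1..N div 24}. coprime n (6::nat)}
      \<le> (2 ^ N * (29/64) ^ (4 * K) * (61/116) ^ (2 * K) :: real)"
    by (intro mult_mono mult_left_mono) auto
  then have "real (card (signed_harmonic_sums {1..N})) \<le> 2 ^ N * (29/64) ^ (4 * K) * (61/116) ^ (2 * K)"
    using card_signed_harmonic_sums_atLeastAtMost_le[of N] by linarith
  then show ?thesis
    unfolding K_def by (simp add: power_mult power_mult_distrib)
qed

lemma summable_power_div:
  fixes q :: real
  assumes "0 \<le> q" "q < 1" "0 < k"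
  shows "summable (\<lambda>N. q ^ (N div k))"
proof -
  define \<sigma> where "\<sigma> = root k q"
  have "0 \<le> \<sigma>" "\<sigma> < 1"
    unfolding \<sigma>_def using assms by auto
  have "q ^ (N div k) \<le> \<sigma> ^ (N - (k - 1))" for N
  proof -
    have "q ^ (N div k) = \<sigma> ^ (k * (N div k))"
      unfolding \<sigma>_def using assms by (simp add: power_mult real_root_pow_pos2)
    also have "\<dots> \<le> \<sigma> ^ (N - (k - 1))"
      using \<open>0 \<le> \<sigma>\<close> \<open>\<sigma> < 1\<close> mod_less_divisor[OF assms(3), of N] mod_mult_div_eq[of N k]
      by (intro power_decreasing) linarith+
    finally show ?thesis .
  qed
  moreover have "summable (\<lambda>N. \<sigma> ^ (N - (k - 1)))"
    using summable_iff_shift[of "\<lambda>N. \<sigma> ^ (N - (k - 1))" "k - 1"] \<open>0 \<le> \<sigma>\<close> \<open>\<sigma> < 1\<close>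
    by (simp only: add_diff_cancel_right' summable_geometric_iff) simp
  ultimately show ?thesis
    using assms(1) by (auto intro: summable_comparison_test'[where N = 0])
qed

lemma summable_power_mult_power_div:
  fixes \<gamma> \<beta> :: real
  assumes "0 \<le> \<gamma>" "0 \<le> \<beta>" "\<gamma> ^ k * \<beta> < 1" "0 < k"
  shows "summable (\<lambda>N. \<gamma> ^ N * \<beta> ^ (N div k))"
proof (rule summable_comparison_test')
  show "summable (\<lambda>N. (1 + \<gamma>) ^ k * (\<gamma> ^ k * \<beta>) ^ (N div k))"
    using assms by (intro summable_mult summable_power_div) auto
  fix N
  have "\<gamma> ^ N = \<gamma> ^ (N mod k + k * (N div k))"
    by simp
  also have "\<dots> = \<gamma> ^ (N mod k) * (\<gamma> ^ k) ^ (N div k)"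
    by (simp only: power_add power_mult)
  also have "\<gamma> ^ (N mod k) \<le> (1 + \<gamma>) ^ k"
    using assms by (intro order.trans[OF power_mono[of \<gamma> "1 + \<gamma>"] power_increasing]) auto
  finally have "\<gamma> ^ N \<le> (1 + \<gamma>) ^ k * (\<gamma> ^ k) ^ (N div k)"
    using assms(1) by (simp add: mult_right_mono)
  then have "\<gamma> ^ N * \<beta> ^ (N div k) \<le> (1 + \<gamma>) ^ k * (\<gamma> ^ k) ^ (N div k) * \<beta> ^ (N div k)"
    using assms(2) by (simp add: mult_right_mono)
  then show "norm (\<gamma> ^ N * \<beta> ^ (N div k)) \<le> (1 + \<gamma>) ^ k * (\<gamma> ^ k * \<beta>) ^ (N div k)"
    using assms(1,2) by (simp add: power_mult_distrib mult.assoc)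
qed

lemma two_power_144_mult_less_exp: "(2::real) ^ 144 * ((29/64) ^ 4 * (61/116) ^ 2) < exp (144 * 0.665)"
proof -
  have "exp 1 \<ge> (2.718::real)"
    using e_approx_32 by (simp add: abs_if split: if_split_asm)
  then have "2.718 ^ 95 * 1.76 \<le> exp (1::real) ^ 95 * exp 0.76"
    by (intro mult_mono power_mono) (use exp_ge_add_one_self[of "0.76::real"] in auto)
  moreover have "(2::real) ^ 144 * ((29/64) ^ 4 * (61/116) ^ 2) < 2.718 ^ 95 * 1.76"
    by (simp add: power_divide)
  moreover have "exp (1::real) ^ 95 * exp 0.76 = exp (144 * 0.665)"
    by (simp add: exp_of_nat_mult[symmetric] exp_add[symmetric])
  ultimately show ?thesis
    by linarith
qed

lemma frak_m_attained: "\<exists>v\<in>signed_harmonic_sums {1..N}. frak_m N \<tau> = \<bar>\<tau> - v\<bar>"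
proof -
  have "frak_m N \<tau> = Min ((\<lambda>v. \<bar>\<tau> - v\<bar>) ` signed_harmonic_sums {1..N})"
    unfolding frak_m_def signed_harmonic_sums_def image_image ..
  moreover have "signed_harmonic_sums {1..N} \<noteq> {}"
    unfolding signed_harmonic_sums_def by (simp add: PiE_eq_empty_iff)
  ultimately have "frak_m N \<tau> \<in> (\<lambda>v. \<bar>\<tau> - v\<bar>) ` signed_harmonic_sums {1..N}"
    by (simp add: finite_signed_harmonic_sums)
  then show ?thesis
    by auto
qed

lemma AE_eventually_far_from_finite_sets:
  fixes V :: "nat \<Rightarrow> real set" and r :: "nat \<Rightarrow> real"
  assumes "\<And>N. finite (V N)" "\<And>N. 0 \<le> r N" "summable (\<lambda>N. real (card (V N)) * r N)"
  shows "AE \<tau> in lborel. eventually (\<lambda>N. \<forall>v\<in>V N. r N < \<bar>\<tau> - v\<bar>) sequentially"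
proof -
  define E where "E N = (\<Union>v\<in>V N. cball v (r N))" for N
  have "E N \<in> sets lborel" for N
    unfolding E_def using assms(1) by (intro sets.finite_UN) auto
  moreover have "emeasure lborel (E N) < \<infinity>" for N
    unfolding E_def using assms(1) by (intro emeasure_bounded_finite bounded_UN) auto
  moreover have measure_E: "measure lborel (E N) \<le> 2 * (real (card (V N)) * r N)" for N
  proof -
    have "measure lborel (E N) \<le> (\<Sum>v\<in>V N. measure lborel (cball v (r N)))"
      unfolding E_def using assms(1) by (intro measure_UNION_le) auto
    also have "\<dots> = 2 * (real (card (V N)) * r N)"
      using assms(2)[of N] by (simp add: cball_eq_atLeastAtMost)
    finally show ?thesis .
  qed
  moreover have "summable (\<lambda>N. measure lborel (E N))"
    using summable_mult[OF assms(3), of 2]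
    by (rule summable_comparison_test'[where N = 0]) (simp add: measure_E)
  ultimately have "AE \<tau> in lborel. eventually (\<lambda>N. \<tau> \<in> space lborel - E N) sequentially"
    by (intro borel_cantelli_AE1)
  then show ?thesis
    by (rule eventually_mono) (auto simp: E_def dist_real_def abs_minus_commute not_le elim!: eventually_mono)
qed

lemma summable_card_signed_harmonic_sums_mult_exp:
  "summable (\<lambda>N. real (card (signed_harmonic_sums {1..N})) * exp (- 0.665 * real N))"
proof (rule summable_comparison_test')
  define \<gamma> :: real where "\<gamma> = 2 * exp (- 0.665)"
  define \<beta> :: real where "\<beta> = (29/64) ^ 4 * (61/116) ^ 2"
  have "\<gamma> ^ 144 * \<beta> = 2 ^ 144 * \<beta> / exp (144 * 0.665)"
    unfolding \<gamma>_def by (simp add: power_mult_distrib exp_of_nat_mult[symmetric] exp_minus field_simps)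
  also have "\<dots> < 1"
    using two_power_144_mult_less_exp unfolding \<beta>_def by simp
  finally show "summable (\<lambda>N. \<gamma> ^ N * \<beta> ^ (N div 144))"
    by (intro summable_power_mult_power_div) (auto simp: \<gamma>_def \<beta>_def)
  fix N
  have "exp (- 0.665 * real N) = exp (- 0.665) ^ N"
    by (simp add: exp_of_nat_mult[symmetric] mult.commute)
  then show "norm (real (card (signed_harmonic_sums {1..N})) * exp (- 0.665 * real N))
      \<le> \<gamma> ^ N * \<beta> ^ (N div 144)"
    using card_signed_harmonic_sums_atLeastAtMost_le_power[of N]
    by (simp add: \<gamma>_def \<beta>_def power_mult_distrib mult_right_mono mult_ac)
qed

theorem proposition2p7:
  shows "AE \<tau> in lborel. \<exists>N0::nat. \<forall>N\<ge>N0. frak_m N \<tau> > exp (- 0.665 * real N)"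
proof -
  have "AE \<tau> in lborel. eventually (\<lambda>N. \<forall>v\<in>signed_harmonic_sums {1..N}.
      exp (- 0.665 * real N) < \<bar>\<tau> - v\<bar>) sequentially"
    by (intro AE_eventually_far_from_finite_sets finite_signed_harmonic_sums
        summable_card_signed_harmonic_sums_mult_exp) auto
  then show ?thesis
  proof (rule eventually_mono)
    fix \<tau>
    assume "eventually (\<lambda>N. \<forall>v\<in>signed_harmonic_sums {1..N}.
      exp (- 0.665 * real N) < \<bar>\<tau> - v\<bar>) sequentially"
    then obtain N0 where far: "\<And>N v. N \<ge> N0 \<Longrightarrow> v \<in> signed_harmonic_sums {1..N}
        \<Longrightarrow> exp (- 0.665 * real N) < \<bar>\<tau> - v\<bar>"
      by (auto simp: eventually_sequentially)
    have "frak_m N \<tau> > exp (- 0.665 * real N)" if "N \<ge> N0" for N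
      using frak_m_attained[of N \<tau>] far[OF that] by force
    then show "\<exists>N0::nat. \<forall>N\<ge>N0. frak_m N \<tau> > exp (- 0.665 * real N)"
      by blast
  qed
qed

end
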